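(* Let $u_1,\dots,u_n$ be Boolean variables and $C_1,\dots,C_m$ clauses, each consisting of exactly 3 literals over these variables. Let $G$ be the graph with vertex set $\{x_i,u_i,v_i,\bar u_i,y_i:1\le i\le n\}\cup\{c_j:1\le j\le m\}\cup\{s_1,s_2,s_3,s_4,t\}$ and the following edges: for each $i$, $x_iu_i$, $u_iv_i$, $v_i\bar u_i$, $\bar u_iy_i$; for each $j$, an edge from $c_j$ to $u_i$ (resp. $\bar u_i$) whenever the literal $u_i$ (resp. $\bar u_i$) appears in $C_j$; for each $j$ and each $s\in\{s_1,s_3,s_4\}$, the edge $sc_j$; the edges $s_1s_2,s_3s_2,s_4s_2$; the edges $ts_1,ts_3,ts_4$; and the edges $tu_i$, $t\bar u_i$ for all $i$. Then (a) $\tilde\gamma_c(G-e)\le 3n+2$ for every edge $e\in E(G)$, and (b) $\tilde\gamma_c(G)=3n+1$ if and only if $b_{OCD}(G)=1$. Consequently, $\{C_1,\dots,C_m\}$ is satisfiable if and only if $b_{OCD}(G)=1$.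
   Context: All graphs are finite and simple. A set $S\subseteq V$ is a dominating set of $G=(V,E)$ if every vertex not in $S$ is adjacent to a vertex of $S$. A set $\tilde D\subseteq V$ is an outer-connected dominating set of $G$ if $\tilde D$ is dominating and the induced subgraph $G[V\setminus\tilde D]$ is connected (the empty graph counts as connected). $\tilde\gamma_c(G)$ denotes the minimum size of an outer-connected dominating set of $G$. For a graph $G$ without isolated vertices, $b_{OCD}(G)$ is the minimum number of edges whose removal from $G$ yields a graph $G'$ with $\tilde\gamma_c(G')>\tilde\gamma_c(G)$. A collection of clauses is satisfiable if some truth assignment makes every clause contain a true literal. *)

theory Defs
  imports Main
begin

definition dominating_set :: "'a set \<Rightarrow> 'a set set \<Rightarrow> 'a set \<Rightarrow> bool" where
  "dominating_set V E S \<longleftrightarrow> S \<subseteq> V \<and> (\<forall>v \<in> V - S. \<exists>s \<in> S. {v, s} \<in> E)"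

text \<open>The induced subgraph on W is connected (the empty graph counts as connected).\<close>
definition induced_connected :: "'a set set \<Rightarrow> 'a set \<Rightarrow> bool" where
  "induced_connected E W \<longleftrightarrow>
     (\<forall>a \<in> W. \<forall>b \<in> W. (a, b) \<in> {(x, y). x \<in> W \<and> y \<in> W \<and> {x, y} \<in> E}\<^sup>*)"

definition outer_connected_dominating :: "'a set \<Rightarrow> 'a set set \<Rightarrow> 'a set \<Rightarrow> bool" where
  "outer_connected_dominating V E D \<longleftrightarrow> dominating_set V E D \<and> induced_connected E (V - D)"

text \<open>Outer-connected domination number (V itself is always such a set).\<close>
definition ocd_number :: "'a set \<Rightarrow> 'a set set \<Rightarrow> nat" where
  "ocd_number V E = Min (card ` {D. outer_connected_dominating V E D})"

definition bondage_ocd :: "'a set \<Rightarrow> 'a set set \<Rightarrow> nat" where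
  "bondage_ocd V E = (LEAST k. \<exists>F \<subseteq> E. card F = k \<and> ocd_number V (E - F) > ocd_number V E)"

text \<open>A literal (i, True) is u_i, (i, False) is the negated literal.\<close>
type_synonym literal = "nat \<times> bool"

datatype vert = X nat | U nat | W nat | Ubar nat | Y nat | Cv nat | S1 | S2 | S3 | S4 | T

fun lit_vertex :: "literal \<Rightarrow> vert" where
  "lit_vertex (i, True) = U i"
| "lit_vertex (i, False) = Ubar i"

definition red_V :: "nat \<Rightarrow> nat \<Rightarrow> vert set" where
  "red_V n m = (\<Union>i \<in> {1..n}. {X i, U i, W i, Ubar i, Y i}) \<union> Cv ` {1..m} \<union> {S1, S2, S3, S4, T}"

definition red_E :: "nat \<Rightarrow> nat \<Rightarrow> (nat \<Rightarrow> literal set) \<Rightarrow> vert set set" where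
  "red_E n m C =
     (\<Union>i \<in> {1..n}. {{X i, U i}, {U i, W i}, {W i, Ubar i}, {Ubar i, Y i}, {T, U i}, {T, Ubar i}})
   \<union> {{Cv j, lit_vertex l} | j l. j \<in> {1..m} \<and> l \<in> C j}
   \<union> (\<Union>j \<in> {1..m}. {{S1, Cv j}, {S3, Cv j}, {S4, Cv j}})
   \<union> {{S1, S2}, {S3, S2}, {S4, S2}, {T, S1}, {T, S3}, {T, S4}}"

definition satisfiable :: "nat \<Rightarrow> (nat \<Rightarrow> literal set) \<Rightarrow> bool" where
  "satisfiable m C \<longleftrightarrow> (\<exists>a :: nat \<Rightarrow> bool. \<forall>j \<in> {1..m}. \<exists>(i, b) \<in> C j. a i = b)"

end

theory Submission
  imports Defs
begin

text \<open>
  Vertices are named as in the datatype vert (W i is the paper's v_i). An outer-connected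
  dominating set D of a spanning subgraph of G contains every X i and Y i (a pendant vertex
  left outside D would be isolated in G - D, forcing D to be everything else), one of
  U i, W i, Ubar i for each i (to dominate W i) and one of S1, ..., S4 (to dominate S2).
  These 3n + 1 vertices are distinct, so |D| >= 3n + 1, with equality only if D consists of
  them together with S2. Such a D dominates every Cv j through a literal vertex, i.e. it
  encodes a satisfying assignment; conversely every satisfying assignment yields such a D,
  with T adjacent or at distance two to every other vertex of G - D. Removing the edge
  {S1, S2} leaves S1 undominated by any such D. On the other hand, for every edge e one of
  the sets X i, Y i, W i (all i) plus S2 and one of S1, S3, S4, possibly with one W i
  exchanged for U i or Ubar i, remains outer-connected dominating in G - e.
\<close>

abbreviation induced_edges :: "'a set set \<Rightarrow> 'a set \<Rightarrow> ('a \<times> 'a) set" where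
  "induced_edges E R \<equiv> {(x, y). x \<in> R \<and> y \<in> R \<and> {x, y} \<in> E}"

lemma induced_edge_rtrancl:
  "x \<in> R \<Longrightarrow> y \<in> R \<Longrightarrow> {x, y} \<in> E \<Longrightarrow> (x, y) \<in> (induced_edges E R)\<^sup>*"
  by (rule r_into_rtrancl) simp

lemma induced_edges_rtrancl_step:
  "(y, h) \<in> (induced_edges E R)\<^sup>* \<Longrightarrow> x \<in> R \<Longrightarrow> y \<in> R \<Longrightarrow> {x, y} \<in> E
    \<Longrightarrow> (x, h) \<in> (induced_edges E R)\<^sup>*"
  by (rule converse_rtrancl_into_rtrancl) auto

lemma induced_connected_if_reaches:
  assumes "h \<in> R" and reach: "\<And>a. a \<in> R \<Longrightarrow> (a, h) \<in> (induced_edges E R)\<^sup>*"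
  shows "induced_connected E R"
  unfolding induced_connected_def
proof (intro ballI)
  fix a b assume "a \<in> R" "b \<in> R"
  have "(induced_edges E R)\<inverse> = induced_edges E R" by (auto simp: insert_commute)
  then have "(h, b) \<in> (induced_edges E R)\<^sup>*"
    using rtrancl_converseI[OF reach[OF \<open>b \<in> R\<close>]] by simp
  with reach[OF \<open>a \<in> R\<close>] show "(a, b) \<in> (induced_edges E R)\<^sup>*" by (rule rtrancl_trans)
qed

lemma outer_connected_dominatingI:
  assumes "D \<subseteq> V" and "\<And>v. v \<in> V - D \<Longrightarrow> \<exists>d \<in> D. {v, d} \<in> E" and h: "h \<in> V - D"
    and near: "\<And>v. v \<in> V - D \<Longrightarrow> v = h \<or> {v, h} \<in> E \<or> (\<exists>w \<in> V - D. {v, w} \<in> E \<and> {w, h} \<in> E)"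
  shows "outer_connected_dominating V E D"
proof -
  have "(v, h) \<in> (induced_edges E (V - D))\<^sup>*" if v: "v \<in> V - D" for v
  proof -
    from near[OF v] consider "v = h" | "{v, h} \<in> E" | w where "w \<in> V - D" "{v, w} \<in> E" "{w, h} \<in> E"
      by blast
    then show ?thesis
    proof cases
      case 2
      with v h show ?thesis by (intro induced_edge_rtrancl)
    next
      case (3 w)
      with h have "(w, h) \<in> (induced_edges E (V - D))\<^sup>*" by (intro induced_edge_rtrancl)
      then show ?thesis by (rule induced_edges_rtrancl_step) (use 3 v in auto)
    qed simp
  qed
  with assms induced_connected_if_reaches[OF h] show ?thesis
    unfolding outer_connected_dominating_def dominating_set_def by blast
qed

lemma dominated_after_edge_removal:
  assumes "{a, b} \<subseteq> D" and "a \<noteq> b" and "{v, a} \<in> E" and "{v, b} \<in> E"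
  shows "\<exists>d \<in> D. {v, d} \<in> E - {e}"
proof (cases "{v, a} = e")
  case True
  with assms(2) have "{v, b} \<noteq> e" by (auto simp: doubleton_eq_iff)
  with assms show ?thesis by blast
qed (use assms in blast)

lemma outer_connected_dominating_mono:
  assumes "E' \<subseteq> E" and "outer_connected_dominating V E' D"
  shows "outer_connected_dominating V E D"
proof -
  have "induced_edges E' (V - D) \<subseteq> induced_edges E (V - D)" using assms(1) by blast
  then show ?thesis
    using assms rtrancl_mono
    unfolding outer_connected_dominating_def dominating_set_def induced_connected_def by blast
qed

lemma outer_connected_dominating_remove_edge:
  assumes D: "outer_connected_dominating V E D" and "a \<in> D"
    and d: "d \<in> D - {a}" "{b, d} \<in> E"
  shows "outer_connected_dominating V (E - {{a, b}}) D"
proof -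
  have "induced_edges (E - {{a, b}}) (V - D) = induced_edges E (V - D)"
    using \<open>a \<in> D\<close> by (auto simp: doubleton_eq_iff)
  moreover have "\<exists>d' \<in> D. {v, d'} \<in> E - {{a, b}}" if "v \<in> V - D" for v
  proof -
    from D that obtain d' where "d' \<in> D" "{v, d'} \<in> E"
      unfolding outer_connected_dominating_def dominating_set_def by blast
    with that \<open>a \<in> D\<close> d show ?thesis by (cases "{v, d'} = {a, b}") (auto simp: doubleton_eq_iff)
  qed
  ultimately show ?thesis
    using D unfolding outer_connected_dominating_def dominating_set_def induced_connected_def by auto
qed

lemma outer_connected_dominating_self: "outer_connected_dominating V E V"
  by (simp add: outer_connected_dominating_def dominating_set_def induced_connected_def)

lemma finite_ocd_cards:
  "finite V \<Longrightarrow> finite (card ` {D. outer_connected_dominating V E D})"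
  by (rule finite_imageI, rule finite_subset[of _ "Pow V"])
    (auto simp: outer_connected_dominating_def dominating_set_def)

lemma ocd_number_le:
  "finite V \<Longrightarrow> outer_connected_dominating V E D \<Longrightarrow> ocd_number V E \<le> card D"
  unfolding ocd_number_def by (rule Min_le) (auto simp: finite_ocd_cards)

lemma ocd_number_obtain:
  assumes "finite V"
  obtains D where "outer_connected_dominating V E D" and "card D = ocd_number V E"
proof -
  have "ocd_number V E \<in> card ` {D. outer_connected_dominating V E D}"
    unfolding ocd_number_def using outer_connected_dominating_self[of V E]
    by (intro Min_in) (auto simp: finite_ocd_cards assms)
  then show ?thesis using that by auto
qed

lemma ocd_number_antimono:
  "finite V \<Longrightarrow> E' \<subseteq> E \<Longrightarrow> ocd_number V E \<le> ocd_number V E'"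
  by (metis ocd_number_obtain ocd_number_le outer_connected_dominating_mono)

lemma ocd_number_no_edges: "finite V \<Longrightarrow> ocd_number V {} = card V"
proof -
  assume "finite V"
  then obtain D where "outer_connected_dominating V {} D" "card D = ocd_number V {}"
    by (rule ocd_number_obtain)
  moreover from this(1) have "D = V"
    by (auto simp: outer_connected_dominating_def dominating_set_def)
  ultimately show ?thesis by simp
qed

lemma bondage_ocd_eq_1_iff:
  assumes "finite V" and "finite E" and "ocd_number V E < card V"
  shows "bondage_ocd V E = 1 \<longleftrightarrow> (\<exists>e \<in> E. ocd_number V E < ocd_number V (E - {e}))"
proof -
  let ?P = "\<lambda>k. \<exists>F \<subseteq> E. card F = k \<and> ocd_number V E < ocd_number V (E - F)"
  have "?P (card E)" using assms by (intro exI[of _ E]) (simp add: ocd_number_no_edges)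
  then have least: "?P (bondage_ocd V E)" unfolding bondage_ocd_def by (rule LeastI)
  have "\<not> ?P 0" using assms(2) by (metis Diff_empty card_0_eq finite_subset less_irrefl)
  with least have "bondage_ocd V E \<noteq> 0" by metis
  moreover have "bondage_ocd V E \<le> 1" if "?P 1" using that unfolding bondage_ocd_def by (rule Least_le)
  moreover have "?P 1 \<longleftrightarrow> (\<exists>e \<in> E. ocd_number V E < ocd_number V (E - {e}))"
    by (auto simp: card_Suc_eq)
  ultimately show ?thesis using least by (metis One_nat_def le_SucE le_zero_eq)
qed

lemma mem_red_V:
  "v \<in> red_V n m \<longleftrightarrow> (case v of X i \<Rightarrow> i \<in> {1..n} | U i \<Rightarrow> i \<in> {1..n} | W i \<Rightarrow> i \<in> {1..n}
     | Ubar i \<Rightarrow> i \<in> {1..n} | Y i \<Rightarrow> i \<in> {1..n} | Cv j \<Rightarrow> j \<in> {1..m} | _ \<Rightarrow> True)"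
  by (cases v) (auto simp: red_V_def)

lemma finite_red_V: "finite (red_V n m)"
  by (simp add: red_V_def)

text \<open>An orientation of red_E listing every edge exactly once, so that neighbourhoods in G
  can be computed by case analysis on vertices.\<close>

fun red_adj :: "nat \<Rightarrow> nat \<Rightarrow> (nat \<Rightarrow> literal set) \<Rightarrow> vert \<Rightarrow> vert \<Rightarrow> bool" where
  "red_adj n m C (X i) v \<longleftrightarrow> i \<in> {1..n} \<and> v = U i"
| "red_adj n m C (U i) v \<longleftrightarrow> i \<in> {1..n} \<and> (v = W i \<or> v = T)"
| "red_adj n m C (W i) v \<longleftrightarrow> i \<in> {1..n} \<and> v = Ubar i"
| "red_adj n m C (Ubar i) v \<longleftrightarrow> i \<in> {1..n} \<and> (v = Y i \<or> v = T)"
| "red_adj n m C (Cv j) v \<longleftrightarrow> j \<in> {1..m} \<and> (v \<in> lit_vertex ` C j \<or> v = S1 \<or> v = S3 \<or> v = S4)"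
| "red_adj n m C S1 v \<longleftrightarrow> v = S2 \<or> v = T"
| "red_adj n m C S3 v \<longleftrightarrow> v = S2 \<or> v = T"
| "red_adj n m C S4 v \<longleftrightarrow> v = S2 \<or> v = T"
| "red_adj n m C (Y i) v \<longleftrightarrow> False"
| "red_adj n m C S2 v \<longleftrightarrow> False"
| "red_adj n m C T v \<longleftrightarrow> False"

lemma red_adj_in_red_E: "red_adj n m C a b \<Longrightarrow> {a, b} \<in> red_E n m C"
  by (cases a) (auto simp: red_E_def doubleton_eq_iff)

lemma red_E_obtain_adj:
  assumes "e \<in> red_E n m C"
  obtains a b where "e = {a, b}" and "red_adj n m C a b"
proof -
  have oriented: "\<exists>a' b'. {a, b} = {a', b'} \<and> red_adj n m C a' b'"
    if "red_adj n m C a b \<or> red_adj n m C b a" for a b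
    using that insert_commute by metis
  have "\<exists>a b. e = {a, b} \<and> red_adj n m C a b"
    using assms unfolding red_E_def
    by - (elim UnE UN_E insertE emptyE CollectE exE conjE; hypsubst; rule oriented; auto)
  with that show ?thesis by blast
qed

lemma doubleton_in_red_E_iff [simp]:
  "{a, b} \<in> red_E n m C \<longleftrightarrow> red_adj n m C a b \<or> red_adj n m C b a"
proof
  assume "{a, b} \<in> red_E n m C"
  then obtain a' b' where "{a, b} = {a', b'}" "red_adj n m C a' b'" by (rule red_E_obtain_adj)
  then show "red_adj n m C a b \<or> red_adj n m C b a" by (auto simp: doubleton_eq_iff)
qed (auto simp: insert_commute dest: red_adj_in_red_E)

lemma lit_vertex_pair: "lit_vertex (i, b) = (if b then U i else Ubar i)"
  by (cases b) simp_all

lemma mem_lit_vertex_image: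
  "v \<in> lit_vertex ` A \<longleftrightarrow>
     (case v of U i \<Rightarrow> (i, True) \<in> A | Ubar i \<Rightarrow> (i, False) \<in> A | _ \<Rightarrow> False)"
  by (cases v) (auto simp: image_iff Bex_def split_paired_Ex lit_vertex_pair)

lemma singleton_notin_red_E [simp]: "{a} \<notin> red_E n m C"
  using doubleton_in_red_E_iff[of a a] by (cases a) (auto simp: mem_lit_vertex_image)

lemma red_E_neighbour_X: "{X k, w} \<in> red_E n m C \<Longrightarrow> w = U k"
  by (cases w) (auto simp: mem_lit_vertex_image)

lemma red_E_neighbour_Y: "{Y k, w} \<in> red_E n m C \<Longrightarrow> w = Ubar k"
  by (cases w) (auto simp: mem_lit_vertex_image)

lemma red_E_neighbour_W: "{W k, w} \<in> red_E n m C \<Longrightarrow> w = U k \<or> w = Ubar k"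
  by (cases w) (auto simp: mem_lit_vertex_image)

lemma red_E_neighbour_S2: "{S2, w} \<in> red_E n m C \<Longrightarrow> w \<in> {S1, S3, S4}"
  by (cases w) (auto simp: mem_lit_vertex_image)

lemma red_E_neighbour_S:
  "t \<in> {S1, S3, S4} \<Longrightarrow> {t, w} \<in> red_E n m C \<Longrightarrow> w \<in> {S2, T} \<union> range Cv"
  by (cases w) (auto simp: mem_lit_vertex_image)

lemma red_E_neighbour_T:
  "{T, w} \<in> red_E n m C \<Longrightarrow> (\<exists>i \<in> {1..n}. w \<in> {U i, Ubar i}) \<or> w \<in> {S1, S3, S4}"
  by (cases w) (auto simp: mem_lit_vertex_image)

lemma red_E_neighbour_Cv:
  "{Cv j, w} \<in> red_E n m C \<Longrightarrow> w \<in> {S1, S3, S4} \<union> lit_vertex ` C j"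
  by (cases w) (auto simp: mem_lit_vertex_image)

lemma outer_connected_dominating_complement_singleton:
  assumes D: "outer_connected_dominating V E D" and z: "z \<in> V - D"
    and nbrs: "\<And>w. {z, w} \<in> E \<Longrightarrow> w \<in> D"
  shows "V - D = {z}"
proof -
  have "b = z" if "b \<in> V - D" for b
  proof -
    from D z that have "(z, b) \<in> (induced_edges E (V - D))\<^sup>*"
      unfolding outer_connected_dominating_def induced_connected_def by blast
    then show ?thesis by (cases rule: converse_rtranclE) (use nbrs in auto)
  qed
  with z show ?thesis by blast
qed

definition middle_choice :: "nat \<Rightarrow> (nat \<Rightarrow> vert) \<Rightarrow> bool" where
  "middle_choice n f \<longleftrightarrow> (\<forall>k \<in> {1..n}. f k \<in> {U k, W k, Ubar k})"

lemma middle_choiceD: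
  "middle_choice n f \<Longrightarrow> k \<in> {1..n} \<Longrightarrow> f k = U k \<or> f k = W k \<or> f k = Ubar k"
  by (simp add: middle_choice_def)

definition gadget_set :: "nat \<Rightarrow> (nat \<Rightarrow> vert) \<Rightarrow> vert set" where
  "gadget_set n f = X ` {1..n} \<union> Y ` {1..n} \<union> f ` {1..n}"

lemma mem_gadget_set: "v \<in> gadget_set n f \<longleftrightarrow> (\<exists>k \<in> {1..n}. v = X k \<or> v = Y k \<or> v = f k)"
  by (auto simp: gadget_set_def)

lemma finite_gadget_set [simp]: "finite (gadget_set n f)"
  by (simp add: gadget_set_def)

lemma special_vertex_notin_gadget_set:
  assumes f: "middle_choice n f" and v: "v \<in> {S1, S2, S3, S4, T} \<union> range Cv"
  shows "v \<notin> gadget_set n f"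
proof
  assume "v \<in> gadget_set n f"
  then obtain k where "k \<in> {1..n}" "v = X k \<or> v = Y k \<or> v = f k" by (auto simp: mem_gadget_set)
  with middle_choiceD[OF f this(1)] v show False by auto
qed

lemma card_gadget_set:
  assumes f: "middle_choice n f"
  shows "card (gadget_set n f) = 3 * n"
proof -
  have inj: "inj_on f {1..n}"
  proof (rule inj_onI)
    fix a b assume "a \<in> {1..n}" "b \<in> {1..n}" "f a = f b"
    from middle_choiceD[OF f \<open>a \<in> {1..n}\<close>] middle_choiceD[OF f \<open>b \<in> {1..n}\<close>]
    show "a = b" using \<open>f a = f b\<close> by (elim disjE) simp_all
  qed
  have "f k \<notin> X ` {1..n} \<union> Y ` {1..n}" if "k \<in> {1..n}" for k
    using middle_choiceD[OF f that] by auto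
  then have "(X ` {1..n} \<union> Y ` {1..n}) \<inter> f ` {1..n} = {}" by force
  then have "card (gadget_set n f) = card (X ` {1..n} \<union> Y ` {1..n}) + card (f ` {1..n})"
    unfolding gadget_set_def by (intro card_Un_disjoint) simp_all
  also have "card (X ` {1..n} \<union> Y ` {1..n}) = card (X ` {1..n}) + card (Y ` {1..n})"
    by (intro card_Un_disjoint) auto
  finally show ?thesis using card_image[OF inj] by (simp add: card_image inj_on_def)
qed

lemma middle_choice_W: "middle_choice n W"
  by (simp add: middle_choice_def)

lemma middle_choice_W_upd: "c \<in> {U i, Ubar i} \<Longrightarrow> middle_choice n (W(i := c))"
  by (auto simp: middle_choice_def)

lemma card_insert_insert_gadget_set_le:
  "middle_choice n f \<Longrightarrow> card (insert s (insert t (gadget_set n f))) \<le> 3 * n + 2"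
  using card_insert_le_m1 by (simp add: card_insert_if card_gadget_set)

lemma card_red_V_Diff_singleton_gt: "3 * n + 2 < card (red_V n m - {v})"
proof -
  let ?B = "insert T (insert S1 (insert S3 (insert S2 (gadget_set n W))))"
  have "card ?B = 3 * n + 4"
    using card_gadget_set[OF middle_choice_W] by (simp add: mem_gadget_set)
  moreover have "card ?B - 1 \<le> card (?B - {v})"
    by (simp add: card_Diff_singleton_if)
  moreover have "?B \<subseteq> red_V n m" by (auto simp: gadget_set_def red_V_def)
  then have "card (?B - {v}) \<le> card (red_V n m - {v})"
    by (intro card_mono) (auto simp: finite_red_V)
  ultimately show ?thesis by linarith
qed

text \<open>The forced vertices X i, Y i, one middle vertex per gadget and one of S1, ..., S4
  already exhaust a set of size at most 3n + 1; that last vertex must be S2, since otherwise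
  another of S1, S3, S4 would be undominated.\<close>

lemma small_red_ocd_shape:
  assumes D: "outer_connected_dominating (red_V n m) E D" and E: "E \<subseteq> red_E n m C"
    and small: "card D \<le> 3 * n + 1"
  obtains f where "middle_choice n f" and "D = insert S2 (gadget_set n f)"
proof -
  let ?V = "red_V n m" and ?I = "{1..n}"
  have DV: "D \<subseteq> ?V" and dom: "\<And>v. v \<in> ?V - D \<Longrightarrow> \<exists>d \<in> D. {v, d} \<in> red_E n m C"
    using D E unfolding outer_connected_dominating_def dominating_set_def by blast+
  have finD: "finite D" using DV finite_red_V finite_subset by blast
  have pendant_in_D: "z \<in> D" if "z \<in> ?V" and nbr: "\<And>w. {z, w} \<in> red_E n m C \<Longrightarrow> w = q" for z q
  proof (rule ccontr)
    assume "z \<notin> D"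
    then have "q \<in> D" using dom[of z] nbr \<open>z \<in> ?V\<close> by blast
    then have "?V - D = {z}"
      using outer_connected_dominating_complement_singleton[OF D] \<open>z \<in> ?V\<close> \<open>z \<notin> D\<close> nbr E
      by blast
    then have "D = ?V - {z}" using DV by blast
    with small card_red_V_Diff_singleton_gt[of n m z] show False by simp
  qed
  have leaves: "X k \<in> D \<and> Y k \<in> D" if k: "k \<in> ?I" for k
  proof
    show "X k \<in> D"
      by (rule pendant_in_D[of _ "U k"]) (use k in \<open>simp add: mem_red_V\<close>, erule red_E_neighbour_X)
    show "Y k \<in> D"
      by (rule pendant_in_D[of _ "Ubar k"]) (use k in \<open>simp add: mem_red_V\<close>, erule red_E_neighbour_Y)
  qed
  have "\<forall>k \<in> ?I. \<exists>v. v \<in> D \<and> v \<in> {U k, W k, Ubar k}"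
  proof
    fix k assume k: "k \<in> ?I"
    show "\<exists>v. v \<in> D \<and> v \<in> {U k, W k, Ubar k}"
    proof (cases "W k \<in> D")
      case False
      then obtain d where "d \<in> D" "{W k, d} \<in> red_E n m C" using dom[of "W k"] k by (auto simp: mem_red_V)
      then show ?thesis using red_E_neighbour_W by blast
    qed blast
  qed
  then obtain f where "\<forall>k \<in> ?I. f k \<in> D \<and> f k \<in> {U k, W k, Ubar k}"
    by (metis bchoice)
  then have f: "middle_choice n f" and fD: "f ` ?I \<subseteq> D"
    unfolding middle_choice_def by blast+
  obtain s where s: "s \<in> D" "s \<in> {S1, S2, S3, S4}"
  proof (cases "S2 \<in> D")
    case False
    then obtain d where "d \<in> D" "{S2, d} \<in> red_E n m C" using dom[of S2] by (auto simp: mem_red_V)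
    with that show ?thesis using red_E_neighbour_S2 by blast
  qed (use that in blast)
  have "insert s (gadget_set n f) \<subseteq> D" using leaves fD s by (auto simp: gadget_set_def)
  moreover have "card (insert s (gadget_set n f)) = 3 * n + 1"
  proof -
    have "s \<notin> gadget_set n f" using s special_vertex_notin_gadget_set[OF f] by blast
    then show ?thesis by (simp add: card_gadget_set[OF f])
  qed
  ultimately have D_eq: "D = insert s (gadget_set n f)"
    using small finD by (metis card_seteq)
  have "s = S2"
  proof (rule ccontr)
    assume "s \<noteq> S2"
    then obtain t where t: "t \<in> {S1, S3, S4}" "t \<noteq> s" using s by blast
    then have "t \<notin> D" using special_vertex_notin_gadget_set[OF f] by (auto simp: D_eq)
    then obtain d where "d \<in> D" "{t, d} \<in> red_E n m C" using dom[of t] t by (auto simp: mem_red_V)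
    moreover have "S2 \<notin> D" "T \<notin> D" "Cv j \<notin> D" for j
      using \<open>s \<noteq> S2\<close> s special_vertex_notin_gadget_set[OF f] by (auto simp: D_eq)
    ultimately show False using red_E_neighbour_S[OF t(1)] by blast
  qed
  with f D_eq that show ?thesis by blast
qed

lemma red_ocd_card_ge:
  assumes "outer_connected_dominating (red_V n m) E D" and "E \<subseteq> red_E n m C"
  shows "3 * n + 1 \<le> card D"
proof (rule ccontr)
  assume "\<not> 3 * n + 1 \<le> card D"
  then have "card D \<le> 3 * n + 1" by simp
  then obtain f where f: "middle_choice n f" and "D = insert S2 (gadget_set n f)"
    using small_red_ocd_shape[OF assms] by blast
  moreover have "S2 \<notin> gadget_set n f" using special_vertex_notin_gadget_set[OF f] by blast
  ultimately have "card D = 3 * n + 1" by (simp add: card_gadget_set[OF f])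
  with \<open>\<not> 3 * n + 1 \<le> card D\<close> show False by simp
qed

lemma satisfiable_if_small_red_ocd:
  assumes D: "outer_connected_dominating (red_V n m) (red_E n m C) D" and small: "card D \<le> 3 * n + 1"
  shows "satisfiable m C"
proof -
  obtain f where f: "middle_choice n f" and D_eq: "D = insert S2 (gadget_set n f)"
    using small_red_ocd_shape[OF D subset_refl small] by blast
  have dom: "\<And>v. v \<in> red_V n m - D \<Longrightarrow> \<exists>d \<in> D. {v, d} \<in> red_E n m C"
    using D unfolding outer_connected_dominating_def dominating_set_def by blast
  have special: "v \<notin> D" if "v \<in> {S1, S3, S4, T} \<union> range Cv" for v
    using that special_vertex_notin_gadget_set[OF f, of v] by (auto simp: D_eq)
  define a where "a i \<longleftrightarrow> f i = U i" for i
  have "\<exists>(i, b) \<in> C j. a i = b" if j: "j \<in> {1..m}" for j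
  proof -
    obtain d where "d \<in> D" and "{Cv j, d} \<in> red_E n m C"
      using dom[of "Cv j"] special[of "Cv j"] j by (auto simp: mem_red_V)
    then have "d \<in> lit_vertex ` C j" using red_E_neighbour_Cv special by blast
    then obtain i b where ib: "(i, b) \<in> C j" "d = lit_vertex (i, b)" by auto
    then have "d \<in> gadget_set n f" using \<open>d \<in> D\<close> by (cases b) (auto simp: D_eq)
    then obtain k where "k \<in> {1..n}" "d = f k"
      using ib(2) by (cases b) (auto simp: mem_gadget_set)
    with middle_choiceD[OF f this(1)] ib(2) have "f i = lit_vertex (i, b)" by (cases b) auto
    then have "a i = b" by (cases b) (auto simp: a_def)
    with ib show ?thesis by blast
  qed
  then show ?thesis unfolding satisfiable_def by blast
qed

lemma red_ocd_remove_S1S2_card_ge: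
  assumes D: "outer_connected_dominating (red_V n m) (red_E n m C - {{S1, S2}}) D"
  shows "3 * n + 2 \<le> card D"
proof (rule ccontr)
  assume "\<not> 3 * n + 2 \<le> card D"
  then have "card D \<le> 3 * n + 1" by simp
  then obtain f where f: "middle_choice n f" and D_eq: "D = insert S2 (gadget_set n f)"
    using small_red_ocd_shape[OF D Diff_subset] by blast
  then have special: "v \<notin> D" if "v \<in> {S1, T} \<union> range Cv" for v
    using that special_vertex_notin_gadget_set[OF f, of v] by auto
  moreover have "S1 \<in> red_V n m" by (simp add: mem_red_V)
  ultimately obtain d where "d \<in> D" "{S1, d} \<in> red_E n m C" "d \<noteq> S2"
    using D unfolding outer_connected_dominating_def dominating_set_def by blast
  with red_E_neighbour_S[of S1] special show False by blast
qed

lemma middle_choice_lit_vertex: "middle_choice n (\<lambda>k. lit_vertex (k, a k))"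
  by (simp add: middle_choice_def lit_vertex_pair)

lemma red_ocd_of_satisfying_assignment:
  assumes n: "1 \<le> n" and C: "\<forall>j \<in> {1..m}. \<forall>(i, b) \<in> C j. i \<in> {1..n}"
    and a: "\<forall>j \<in> {1..m}. \<exists>(i, b) \<in> C j. a i = b"
  shows "outer_connected_dominating (red_V n m) (red_E n m C)
           (insert S2 (gadget_set n (\<lambda>k. lit_vertex (k, a k))))"
    (is "outer_connected_dominating ?V ?E ?D")
proof (rule outer_connected_dominatingI[where h = T])
  show "?D \<subseteq> ?V" by (auto simp: gadget_set_def mem_red_V lit_vertex_pair)
  show "T \<in> ?V - ?D" by (auto simp: gadget_set_def mem_red_V lit_vertex_pair)
  show "\<exists>d \<in> ?D. {v, d} \<in> ?E" if v: "v \<in> ?V - ?D" for v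
  proof (cases v)
    case (U k)
    with v show ?thesis by (intro bexI[of _ "X k"]) (auto simp: mem_gadget_set mem_red_V lit_vertex_pair)
  next
    case (W k)
    with v show ?thesis
      by (intro bexI[of _ "lit_vertex (k, a k)"]) (auto simp: mem_gadget_set mem_red_V lit_vertex_pair)
  next
    case (Ubar k)
    with v show ?thesis by (intro bexI[of _ "Y k"]) (auto simp: mem_gadget_set mem_red_V lit_vertex_pair)
  next
    case (Cv j)
    with v have j: "j \<in> {1..m}" by (simp add: mem_red_V)
    with a obtain i b where ib: "(i, b) \<in> C j" "a i = b" by blast
    with C j have "i \<in> {1..n}" by blast
    with Cv j ib show ?thesis
      by (intro bexI[of _ "lit_vertex (i, b)"])
        (auto simp: mem_gadget_set lit_vertex_pair mem_lit_vertex_image)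
  next
    case T
    with n show ?thesis
      by (intro bexI[of _ "lit_vertex (1, a 1)"]) (auto simp: mem_gadget_set lit_vertex_pair)
  qed (use v in \<open>auto simp: mem_gadget_set mem_red_V lit_vertex_pair\<close>)
  show "v = T \<or> {v, T} \<in> ?E \<or> (\<exists>w \<in> ?V - ?D. {v, w} \<in> ?E \<and> {w, T} \<in> ?E)"
    if v: "v \<in> ?V - ?D" for v
  proof (cases v)
    case (W k)
    with v show ?thesis
      by (intro disjI2 bexI[of _ "lit_vertex (k, \<not> a k)"])
        (auto simp: mem_gadget_set mem_red_V lit_vertex_pair)
  next
    case (Cv j)
    with v show ?thesis
      by (intro disjI2 bexI[of _ S1]) (auto simp: mem_gadget_set mem_red_V lit_vertex_pair)
  qed (use v in \<open>auto simp: mem_gadget_set mem_red_V lit_vertex_pair\<close>)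
qed

lemma red_ocd_remove_edge_off_T:
  assumes s: "s \<in> {S1, S3, S4}" and T: "T \<notin> e" and sC: "\<forall>j. e \<noteq> {s, Cv j}"
    and S2: "S2 \<in> e \<longrightarrow> s \<in> e"
  shows "outer_connected_dominating (red_V n m) (red_E n m C - {e})
           (insert s (insert S2 (gadget_set n W)))"
    (is "outer_connected_dominating ?V ?E ?D")
proof (rule outer_connected_dominatingI[where h = T])
  show "?D \<subseteq> ?V" using s by (auto simp: mem_gadget_set mem_red_V)
  show "T \<in> ?V - ?D" using s by (auto simp: mem_gadget_set mem_red_V)
  show "\<exists>d \<in> ?D. {v, d} \<in> ?E" if v: "v \<in> ?V - ?D" for v
  proof (cases v)
    case (U k)
    with v show ?thesis
      by (intro dominated_after_edge_removal[of "X k" "W k"]) (auto simp: mem_gadget_set mem_red_V)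
  next
    case (Ubar k)
    with v show ?thesis
      by (intro dominated_after_edge_removal[of "Y k" "W k"]) (auto simp: mem_gadget_set mem_red_V)
  next
    case (Cv j)
    with v s sC show ?thesis by (intro bexI[of _ s]) (auto simp: mem_red_V insert_commute)
  next
    case T
    with s \<open>T \<notin> e\<close> show ?thesis by (intro bexI[of _ s]) auto
  qed (use v s S2 in \<open>auto simp: mem_gadget_set mem_red_V\<close>)
  show "v = T \<or> {v, T} \<in> ?E \<or> (\<exists>w \<in> ?V - ?D. {v, w} \<in> ?E \<and> {w, T} \<in> ?E)"
    if v: "v \<in> ?V - ?D" for v
  proof (cases v)
    case (Cv j)
    obtain t where t: "t \<in> {S1, S3, S4} - {s}" "e \<noteq> {Cv j, t}"
    proof -
      obtain t1 t2 where "t1 \<in> {S1, S3, S4} - {s}" "t2 \<in> {S1, S3, S4} - {s}" "t1 \<noteq> t2"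
        using s by blast
      with that show ?thesis by (metis doubleton_eq_iff)
    qed
    with Cv v s \<open>T \<notin> e\<close> show ?thesis
      by (intro disjI2 bexI[of _ t]) (auto simp: mem_gadget_set mem_red_V insert_commute)
  qed (use v s \<open>T \<notin> e\<close> in \<open>auto simp: mem_gadget_set mem_red_V\<close>)
qed

lemma red_ocd_with_literal_vertex:
  assumes i: "i \<in> {1..n}" and c: "c \<in> {U i, Ubar i}" and s: "s \<in> {S1, S3, S4}"
  shows "outer_connected_dominating (red_V n m) (red_E n m C)
           (insert s (insert S2 (gadget_set n (W(i := c)))))"
    (is "outer_connected_dominating ?V ?E ?D")
proof (rule outer_connected_dominatingI[where h = T])
  show "?D \<subseteq> ?V" using i c s by (auto simp: mem_gadget_set mem_red_V)
  show "T \<in> ?V - ?D" using c s by (auto simp: mem_gadget_set mem_red_V)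
  show "\<exists>d \<in> ?D. {v, d} \<in> ?E" if v: "v \<in> ?V - ?D" for v
  proof (cases v)
    case (U k)
    with v show ?thesis by (intro bexI[of _ "X k"]) (auto simp: mem_gadget_set mem_red_V)
  next
    case (Ubar k)
    with v show ?thesis by (intro bexI[of _ "Y k"]) (auto simp: mem_gadget_set mem_red_V)
  next
    case (W k)
    with v i c show ?thesis by (intro bexI[of _ c]) (auto simp: mem_gadget_set mem_red_V split: if_splits)
  next
    case (Cv j)
    with v s show ?thesis by (intro bexI[of _ s]) (auto simp: mem_red_V)
  next
    case T
    with s show ?thesis by (intro bexI[of _ s]) auto
  qed (use v s in \<open>auto simp: mem_gadget_set mem_red_V\<close>)
  show "v = T \<or> {v, T} \<in> ?E \<or> (\<exists>w \<in> ?V - ?D. {v, w} \<in> ?E \<and> {w, T} \<in> ?E)"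
    if v: "v \<in> ?V - ?D" for v
  proof (cases v)
    case (W k)
    with v i c s show ?thesis
      by (intro disjI2 bexI[of _ "if c = U i then Ubar i else U i"])
        (auto simp: mem_gadget_set mem_red_V split: if_splits)
  next
    case (Cv j)
    obtain t where "t \<in> {S1, S3, S4} - {s}" using s by blast
    with Cv v c show ?thesis by (intro disjI2 bexI[of _ t]) (auto simp: mem_gadget_set mem_red_V)
  qed (use v c s in \<open>auto simp: mem_gadget_set mem_red_V\<close>)
qed

lemma red_ocd_remove_edge_at_T:
  assumes i: "i \<in> {1..n}" and c: "c \<in> {U i, Ubar i}" and s: "s \<in> {S1, S3, S4}"
    and e: "e \<in> {{T, c}, {T, s}}"
  shows "outer_connected_dominating (red_V n m) (red_E n m C - {e})
           (insert s (insert S2 (gadget_set n (W(i := c)))))"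
proof -
  let ?D = "insert s (insert S2 (gadget_set n (W(i := c))))"
  note ocd = red_ocd_with_literal_vertex[OF i c s, of m C]
  have D: "c \<in> ?D" "s \<in> ?D" "c \<noteq> s" using i c s by (auto simp: mem_gadget_set)
  have E: "{T, c} \<in> red_E n m C" "{T, s} \<in> red_E n m C" using i c s by auto
  from e show ?thesis
  proof
    assume "e = {T, c}"
    with outer_connected_dominating_remove_edge[OF ocd, of c s T] D E show ?thesis
      by (simp add: insert_commute)
  next
    assume "e \<in> {{T, s}}"
    with outer_connected_dominating_remove_edge[OF ocd, of s c T] D E show ?thesis
      by (simp add: insert_commute)
  qed
qed

text \<open>An edge at T is avoided by putting its other endpoint into the set, so that T stays
  dominated by a second vertex; any other edge is avoided by the choice of s among S1, S3,
  S4.\<close>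

lemma ocd_number_red_remove_edge_le:
  assumes n: "1 \<le> n" and e: "e \<in> red_E n m C"
  shows "ocd_number (red_V n m) (red_E n m C - {e}) \<le> 3 * n + 2"
proof -
  have bound: "ocd_number (red_V n m) (red_E n m C - {e}) \<le> 3 * n + 2"
    if "outer_connected_dominating (red_V n m) (red_E n m C - {e}) (insert s (insert S2 (gadget_set n f)))"
      and "middle_choice n f" for s f
    using ocd_number_le[OF finite_red_V that(1)] card_insert_insert_gadget_set_le[OF that(2), of s S2]
    by linarith
  have pair: "\<exists>w. e = {x, w}" if "x \<in> e" for x
    using red_E_obtain_adj[OF e] that by blast
  consider "T \<in> e" | "T \<notin> e" "S2 \<in> e" | "T \<notin> e" "S2 \<notin> e" "S1 \<in> e"
    | "T \<notin> e" "S2 \<notin> e" "S1 \<notin> e"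
    by blast
  then show ?thesis
  proof cases
    case 1
    then obtain w where w: "e = {T, w}" using pair by blast
    with e red_E_neighbour_T consider i where "i \<in> {1..n}" "w \<in> {U i, Ubar i}" | "w \<in> {S1, S3, S4}"
      by blast
    then show ?thesis
    proof cases
      case (1 i)
      show ?thesis
        by (rule bound[OF red_ocd_remove_edge_at_T[of i n w S1] middle_choice_W_upd]) (use 1 w in auto)
    next
      case 2
      show ?thesis
        by (rule bound[OF red_ocd_remove_edge_at_T[of 1 n "U 1" w] middle_choice_W_upd]) (use 2 w n in auto)
    qed
  next
    case 2
    then obtain w where w: "e = {S2, w}" using pair by blast
    with e have "w \<in> {S1, S3, S4}" using red_E_neighbour_S2 by blast
    then show ?thesis
      by (rule bound[OF red_ocd_remove_edge_off_T[of w] middle_choice_W])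
        (use 2 w in \<open>auto simp: doubleton_eq_iff\<close>)
  next
    case 3
    show ?thesis by (rule bound[OF red_ocd_remove_edge_off_T[of S3] middle_choice_W]) (use 3 in auto)
  next
    case 4
    show ?thesis by (rule bound[OF red_ocd_remove_edge_off_T[of S1] middle_choice_W]) (use 4 in auto)
  qed
qed

lemma finite_red_E:
  assumes "\<forall>j \<in> {1..m}. finite (C j)"
  shows "finite (red_E n m C)"
proof -
  have "{{Cv j, lit_vertex l} | j l. j \<in> {1..m} \<and> l \<in> C j}
          = (\<Union>j \<in> {1..m}. (\<lambda>l. {Cv j, lit_vertex l}) ` C j)"
    by blast
  with assms show ?thesis by (simp add: red_E_def)
qed

lemma ocd_number_red_ge: "E \<subseteq> red_E n m C \<Longrightarrow> 3 * n + 1 \<le> ocd_number (red_V n m) E"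
  by (metis ocd_number_obtain finite_red_V red_ocd_card_ge)

lemma ocd_number_red_remove_S1S2_ge:
  "3 * n + 2 \<le> ocd_number (red_V n m) (red_E n m C - {{S1, S2}})"
  by (metis ocd_number_obtain finite_red_V red_ocd_remove_S1S2_card_ge)

lemma satisfiable_iff_ocd_number_red:
  assumes "1 \<le> n" and "\<forall>j \<in> {1..m}. \<forall>(i, b) \<in> C j. i \<in> {1..n}"
  shows "satisfiable m C \<longleftrightarrow> ocd_number (red_V n m) (red_E n m C) = 3 * n + 1"
proof
  assume "satisfiable m C"
  then obtain a where "\<forall>j \<in> {1..m}. \<exists>(i, b) \<in> C j. a i = b" unfolding satisfiable_def by blast
  from ocd_number_le[OF finite_red_V red_ocd_of_satisfying_assignment[OF assms this]]
  have "ocd_number (red_V n m) (red_E n m C) \<le> 3 * n + 1"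
    using card_gadget_set[OF middle_choice_lit_vertex] special_vertex_notin_gadget_set[OF middle_choice_lit_vertex]
    by simp
  with ocd_number_red_ge[OF subset_refl] show "ocd_number (red_V n m) (red_E n m C) = 3 * n + 1"
    by (metis le_antisym)
next
  assume "ocd_number (red_V n m) (red_E n m C) = 3 * n + 1"
  then show "satisfiable m C"
    by (metis ocd_number_obtain finite_red_V satisfiable_if_small_red_ocd order_refl)
qed

lemma ocd_number_red_le:
  assumes "1 \<le> n"
  shows "ocd_number (red_V n m) (red_E n m C) \<le> 3 * n + 2"
proof -
  have "ocd_number (red_V n m) (red_E n m C) \<le> ocd_number (red_V n m) (red_E n m C - {{S1, S2}})"
    by (rule ocd_number_antimono[OF finite_red_V]) blast
  also have "\<dots> \<le> 3 * n + 2" by (rule ocd_number_red_remove_edge_le[OF assms]) simp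
  finally show ?thesis .
qed

lemma bondage_ocd_red_eq_1_iff:
  assumes n: "1 \<le> n" and C: "\<forall>j \<in> {1..m}. finite (C j)"
  shows "bondage_ocd (red_V n m) (red_E n m C) = 1 \<longleftrightarrow> ocd_number (red_V n m) (red_E n m C) = 3 * n + 1"
    (is "?bondage \<longleftrightarrow> ?ocd = _")
proof -
  have "?ocd < card (red_V n m)"
    using ocd_number_red_le[OF n, of m C] card_red_V_Diff_singleton_gt[of n m T]
      card_Diff1_le[of "red_V n m" T]
    by linarith
  then have bondage: "?bondage \<longleftrightarrow> (\<exists>e \<in> red_E n m C. ?ocd < ocd_number (red_V n m) (red_E n m C - {e}))"
    by (intro bondage_ocd_eq_1_iff finite_red_V finite_red_E C)
  show ?thesis
  proof
    assume ?bondage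
    then obtain e where "e \<in> red_E n m C" "?ocd < ocd_number (red_V n m) (red_E n m C - {e})"
      using bondage by blast
    with ocd_number_red_remove_edge_le[OF n] ocd_number_red_ge[OF subset_refl, of n m C]
    show "?ocd = 3 * n + 1" by fastforce
  next
    assume "?ocd = 3 * n + 1"
    with ocd_number_red_remove_S1S2_ge[of n m C]
    have "?ocd < ocd_number (red_V n m) (red_E n m C - {{S1, S2}})" by linarith
    moreover have "{S1, S2} \<in> red_E n m C" by simp
    ultimately show ?bondage using bondage by blast
  qed
qed

theorem claim5p4:
  fixes n m :: nat and C :: "nat \<Rightarrow> literal set"
  assumes "n \<ge> 1"
    and "\<forall>j \<in> {1..m}. card (C j) = 3 \<and> (\<forall>(i, b) \<in> C j. i \<in> {1..n})"
  shows "(\<forall>e \<in> red_E n m C. ocd_number (red_V n m) (red_E n m C - {e}) \<le> 3 * n + 2)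
       \<and> (ocd_number (red_V n m) (red_E n m C) = 3 * n + 1 \<longleftrightarrow> bondage_ocd (red_V n m) (red_E n m C) = 1)
       \<and> (satisfiable m C \<longleftrightarrow> bondage_ocd (red_V n m) (red_E n m C) = 1)"
proof -
  have "\<forall>j \<in> {1..m}. finite (C j)"
    using assms(2) by (metis card.infinite zero_neq_numeral)
  then have "bondage_ocd (red_V n m) (red_E n m C) = 1 \<longleftrightarrow> ocd_number (red_V n m) (red_E n m C) = 3 * n + 1"
    using assms(1) by (rule bondage_ocd_red_eq_1_iff[rotated])
  moreover have "satisfiable m C \<longleftrightarrow> ocd_number (red_V n m) (red_E n m C) = 3 * n + 1"
    using assms by (intro satisfiable_iff_ocd_number_red) auto
  ultimately show ?thesis using ocd_number_red_remove_edge_le[OF assms(1)] by blast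
qed

end
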